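(* Let $s\ge 1$, $q=4^{2s}$, and let $\theta$ be the automorphism of $F_q$ given by $\theta(a)=a^{4^s}$. Let $n$ be odd and let $C$ be a skew cyclic code of length $n$ over $F_q$ generated by a (right) divisor of $x^n-1$ in $F_q[x;\theta]$. If $C$ is a reversible DNA code, then its dual code $C^\perp$ is also a reversible DNA code.
   Context: $F_q[x;\theta]$ is the skew polynomial ring with multiplication determined by $xa=\theta(a)x$. A skew cyclic code of length $n$ is a linear code $C\subseteq F_q^n$ such that $(\theta(c_{n-1}),\theta(c_0),\ldots,\theta(c_{n-2}))\in C$ whenever $(c_0,\ldots,c_{n-1})\in C$; such codes correspond to left $F_q[x;\theta]$-submodules of $F_q[x;\theta]/(x^n-1)$ via $(c_0,\ldots,c_{n-1})\mapsto\sum c_ix^i$. $C^\perp$ is the dual with respect to the standard inner product on $F_q^n$. DNA correspondence: there is a fixed bijection $\tau:F_{4^{2s}}\to\{A,T,G,C\}^{2s}$ such that for every $\beta$, $\tau(\beta^{4^s})$ is the reverse of the string $\tau(\beta)$; it extends to $\phi:F_q^n\to\{A,T,G,C\}^{2sn}$ by concatenation. A code $C\subseteq F_q^n$ is a reversible DNA code if the reverse string $\phi(c)^r$ lies in $\phi(C)$ for all $c\in C$; equivalently, $(\theta(c_{n-1}),\ldots,\theta(c_1),\theta(c_0))\in C$ for every $(c_0,\ldots,c_{n-1})\in C$. *)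

theory Defs
  imports "HOL-Computational_Algebra.Polynomial" "HOL-Library.Cardinality"
begin

text \<open>Multiplication in the skew polynomial ring F[x;theta], with x a = theta(a) x,
  on the carrier of ordinary polynomials (coefficient sequences):
  (sum a_i x^i)(sum b_j x^j) = sum a_i theta^i(b_j) x^(i+j).\<close>
definition skew_mult :: "('a::comm_ring_1 \<Rightarrow> 'a) \<Rightarrow> 'a poly \<Rightarrow> 'a poly \<Rightarrow> 'a poly" where
  "skew_mult \<theta> f g =
     (\<Sum>i\<le>degree f. \<Sum>j\<le>degree g. monom (coeff f i * (\<theta> ^^ i) (coeff g j)) (i + j))"

text \<open>Words of length n are lists of length n; (c_0,...,c_{n-1}) corresponds to sum c_i x^i.\<close>

definition linear_code :: "nat \<Rightarrow> 'a::field list set \<Rightarrow> bool" where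
  "linear_code n C \<longleftrightarrow> (\<forall>c\<in>C. length c = n) \<and> replicate n 0 \<in> C \<and>
     (\<forall>c\<in>C. \<forall>d\<in>C. map2 (+) c d \<in> C) \<and> (\<forall>a. \<forall>c\<in>C. map (\<lambda>x. a * x) c \<in> C)"

definition skew_cyclic_code :: "('a::field \<Rightarrow> 'a) \<Rightarrow> nat \<Rightarrow> 'a list set \<Rightarrow> bool" where
  "skew_cyclic_code \<theta> n C \<longleftrightarrow> linear_code n C \<and>
     (\<forall>c\<in>C. map \<theta> (last c # butlast c) \<in> C)"

text \<open>The code corresponding to the left submodule of F[x;theta]/(x^n - 1) generated by g
  (a right divisor of x^n - 1): residues of degree < n of the left multiples f g.\<close>
definition skew_code_gen :: "('a::field \<Rightarrow> 'a) \<Rightarrow> nat \<Rightarrow> 'a poly \<Rightarrow> 'a list set" where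
  "skew_code_gen \<theta> n g = {c. length c = n \<and> (\<exists>f. Poly c = skew_mult \<theta> f g)}"

definition right_divides_xn1 :: "('a::field \<Rightarrow> 'a) \<Rightarrow> nat \<Rightarrow> 'a poly \<Rightarrow> bool" where
  "right_divides_xn1 \<theta> n g \<longleftrightarrow> (\<exists>h. skew_mult \<theta> h g = monom 1 n - 1)"

definition dual_code :: "nat \<Rightarrow> 'a::field list set \<Rightarrow> 'a list set" where
  "dual_code n C = {v. length v = n \<and> (\<forall>c\<in>C. (\<Sum>i<n. c ! i * v ! i) = 0)}"

text \<open>Reversible DNA code, via the stated equivalent condition
  (theta(c_{n-1}),...,theta(c_0)) in C.\<close>
definition reversible_DNA :: "('a::field \<Rightarrow> 'a) \<Rightarrow> 'a list set \<Rightarrow> bool" where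
  "reversible_DNA \<theta> C \<longleftrightarrow> (\<forall>c\<in>C. rev (map \<theta> c) \<in> C)"

end

theory Submission
  imports Defs "HOL-Number_Theory.Residues"
begin

text \<open>A field with 4^(2s) elements has characteristic 2, so \<theta>(a) = a^(4^s) = a^(2^(2s)) is an
  injective ring endomorphism by the Freshman's Dream. The reversal-with-\<theta> map
  c \<mapsto> rev (map \<theta> c) is therefore injective, and as it maps the finite code C into itself,
  it permutes C. Every codeword of C thus has the form rev (map \<theta> d) with d \<in> C, and the
  inner product of rev (map \<theta> d) with rev (map \<theta> v) is \<theta> applied to the inner product of
  d and v, which vanishes for v in the dual.\<close>

lemma CHAR_eq_2_if_card_power_2:
  assumes "CARD('a::{finite,field}) = 2 ^ k"
  shows "CHAR('a) = 2"
proof -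
  have "prime CHAR('a)"
    using prime_CHAR_semidom finite_imp_CHAR_pos[where ?'a = 'a] by simp
  moreover have "CHAR('a) dvd 2 ^ k"
    using CHAR_dvd_CARD assms by metis
  ultimately show ?thesis
    using prime_dvd_power primes_dvd_imp_eq two_is_prime_nat by blast
qed

lemma additive_power_CHAR_power:
  assumes "prime CHAR('a::comm_ring_1)"
  shows "additive (\<lambda>x::'a. x ^ (CHAR('a) ^ k))"
  by unfold_locales (rule freshmans_dream'[OF assms refl])

lemma inj_power_CHAR_power:
  assumes "prime CHAR('a::idom)"
  shows "inj (\<lambda>x::'a. x ^ (CHAR('a) ^ k))"
proof (rule injI)
  interpret additive "\<lambda>x::'a. x ^ (CHAR('a) ^ k)"
    by (rule additive_power_CHAR_power[OF assms])
  fix a b :: 'a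
  assume "a ^ (CHAR('a) ^ k) = b ^ (CHAR('a) ^ k)"
  then have "(a - b) ^ (CHAR('a) ^ k) = 0"
    by (simp add: diff)
  then show "a = b"
    by simp
qed

lemma inner_rev_map_hom:
  assumes "additive \<theta>" and mult: "\<And>x y. \<theta> (x * y) = \<theta> x * \<theta> y"
    and "length c = n" "length v = n"
  shows "(\<Sum>i<n. rev (map \<theta> c) ! i * rev (map \<theta> v) ! i) = \<theta> (\<Sum>i<n. c ! i * v ! i)"
proof -
  have "(\<Sum>i<n. rev (map \<theta> c) ! i * rev (map \<theta> v) ! i)
      = (\<Sum>i<n. \<theta> (c ! (n - Suc i)) * \<theta> (v ! (n - Suc i)))"
    using assms(3,4) by (auto simp: rev_nth intro!: sum.cong)
  also have "\<dots> = (\<Sum>i<n. \<theta> (c ! i) * \<theta> (v ! i))"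
    by (rule sum.reindex_bij_witness[of _ "\<lambda>i. n - Suc i" "\<lambda>i. n - Suc i"]) auto
  also have "\<dots> = \<theta> (\<Sum>i<n. c ! i * v ! i)"
    by (simp add: additive.sum[OF assms(1)] mult)
  finally show ?thesis .
qed

lemma reversible_DNA_dual_code:
  fixes \<theta> :: "'a::field \<Rightarrow> 'a"
  assumes "additive \<theta>" and mult: "\<And>x y. \<theta> (x * y) = \<theta> x * \<theta> y" and "inj \<theta>"
    and "finite C" and len: "\<forall>c\<in>C. length c = n" and "reversible_DNA \<theta> C"
  shows "reversible_DNA \<theta> (dual_code n C)"
  unfolding reversible_DNA_def
proof
  define F where "F = (\<lambda>c. rev (map \<theta> c))"
  have "inj F"
    using \<open>inj \<theta>\<close> by (auto simp: F_def inj_def inj_map_eq_map)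
  moreover have "F ` C \<subseteq> C"
    using \<open>reversible_DNA \<theta> C\<close> by (auto simp: reversible_DNA_def F_def)
  ultimately have FC: "F ` C = C"
    using endo_inj_surj[OF \<open>finite C\<close>] by (simp add: inj_on_subset)
  fix v assume "v \<in> dual_code n C"
  then have lv: "length v = n" and orth: "\<forall>d\<in>C. (\<Sum>i<n. d ! i * v ! i) = 0"
    by (auto simp: dual_code_def)
  have "(\<Sum>i<n. c ! i * F v ! i) = 0" if "c \<in> C" for c
  proof -
    obtain d where "d \<in> C" "c = F d"
      using FC \<open>c \<in> C\<close> by blast
    then show ?thesis
      using inner_rev_map_hom[OF \<open>additive \<theta>\<close> mult] len lv orth additive.zero[OF \<open>additive \<theta>\<close>]
      by (simp add: F_def)
  qed
  then show "rev (map \<theta> v) \<in> dual_code n C"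
    using FC lv by (auto simp: dual_code_def F_def)
qed

theorem theorem7:
  fixes s n :: nat and g :: "'a::{finite,field} poly" and C :: "'a list set"
  assumes "s \<ge> 1"
    and "CARD('a) = 4 ^ (2 * s)"
    and "odd n"
    and "right_divides_xn1 (\<lambda>a. a ^ (4 ^ s)) n g"
    and "C = skew_code_gen (\<lambda>a. a ^ (4 ^ s)) n g"
    and "skew_cyclic_code (\<lambda>a. a ^ (4 ^ s)) n C"
    and "reversible_DNA (\<lambda>a. a ^ (4 ^ s)) C"
  shows "reversible_DNA (\<lambda>a. a ^ (4 ^ s)) (dual_code n C)"
proof -
  have "CHAR('a) = 2"
    using CHAR_eq_2_if_card_power_2[of "4 * s"] assms(2) by (simp add: power_mult)
  then have \<theta>: "(\<lambda>a::'a. a ^ (4 ^ s)) = (\<lambda>a. a ^ (CHAR('a) ^ (2 * s)))"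
    by (simp add: power_mult)
  have len: "\<forall>c\<in>C. length c = n"
    using assms(6) by (simp add: skew_cyclic_code_def linear_code_def)
  then have "finite C"
    using finite_lists_length_eq[of "UNIV :: 'a set" n] by (auto intro: rev_finite_subset)
  with len show ?thesis
    unfolding \<theta>
    using assms(7) \<open>CHAR('a) = 2\<close>
    by (intro reversible_DNA_dual_code additive_power_CHAR_power inj_power_CHAR_power)
       (auto simp: \<theta> power_mult_distrib)
qed

end
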